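(* Let $f_{\mathcal{X}}:\mathcal{X}\to\mathbb{R}^d$, $f_{\mathcal{Y}}:\mathcal{Y}\to\mathbb{R}^d$, $\tau>0$ and $g(x,y)=f_{\mathcal{X}}(x)^\top f_{\mathcal{Y}}(y)/\tau$. Let $g^*(x,y)=\ln\frac{p(x,y)}{p(x)p(y)}+\Gamma$ for some constant $\Gamma\in\mathbb{R}$. Assume there exist $K$ pairwise disjoint measurable subsets $\mathcal{Y}_1,\dots,\mathcal{Y}_K\subseteq\mathcal{Y}$ with $P_Y(\mathcal{Y}_i)>0$ and constants $\epsilon_1,\epsilon_2\ge0$ such that, for all $x\in\operatorname{supp}p_X$ and all $c\in[K]$, $$\mathrm{KL}\big(P_C(\cdot\mid x)\,\big\|\,P_C(\cdot\mid x;(\mathcal{Y}_i)_{i\in[K]})\big)\le\epsilon_1,\qquad \mathrm{KL}\big(p_Y(\cdot\mid\mathcal{Y}_c)\,\big\|\,p_Y(\cdot\mid x,\mathcal{Y}_c)\big)\le\epsilon_2.$$ Assume further there is $\Delta\ge0$ with $|g(x,y)-g^*(x,y)|\le\Delta$ for all $x\in\operatorname{supp}p_X$, $y\in\operatorname{supp}p_Y$. Then $$\inf_{W\in\mathbb{R}^{d\times K},\,b\in\mathbb{R}^K}\mathcal{L}_{\sup}\big(W^\top f_{\mathcal{X}}(\cdot)+b\big)-\mathcal{L}_{\sup}(h^* )\le\epsilon_1+\epsilon_2+2\Delta.$$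
   Context: $(X,Y)$ has joint density $p(x,y)$ on $\mathcal{X}\times\mathcal{Y}$ with marginal densities $p(x)=p_X(x)$, $p(y)=p_Y(y)$ and conditional density $p(y\mid x)$; $P_Y(\mathcal{Y}')=\int_{\mathcal{Y}'}p(y)dy$, $P_Y(\mathcal{Y}'\mid x)=\int_{\mathcal{Y}'}p(y\mid x)dy$; $\tilde{\mathcal{Y}}=\bigcup_i\mathcal{Y}_i$. Labels $C\in[K]=\{1,\dots,K\}$ with $P_C(c\mid x)$, $p(x,c)=P_C(c\mid x)p_X(x)$. $\mathcal{L}_{\sup}(h)=\mathbb{E}_{(x,c)\sim p(x,c)}\big[-\ln\frac{\exp h(x)_c}{\sum_{i=1}^K\exp h(x)_i}\big]$ for $h:\mathcal{X}\to\mathbb{R}^K$, and $h^*$ is a minimizer of $\mathcal{L}_{\sup}$ over all measurable $h$ (e.g. $h^*(x)_i=\ln P_C(i\mid x)$). $p_Y(y\mid\mathcal{Y}_i)=p(y)/P_Y(\mathcal{Y}_i)$ on $\mathcal{Y}_i$ and $0$ elsewhere; $p_Y(y\mid x,\mathcal{Y}_i)=p(y\mid x)/P_Y(\mathcal{Y}_i\mid x)$ on $\mathcal{Y}_i$ and $0$ elsewhere; $P_C(c\mid x;(\mathcal{Y}_i)_{i\in[K]})=P_Y(\mathcal{Y}_c\mid x)/P_Y(\tilde{\mathcal{Y}}\mid x)$. All expectations and KL divergences are assumed well defined. *)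

theory Defs
  imports "HOL-Probability.Probability"
begin

definition kl_term :: "real \<Rightarrow> real \<Rightarrow> ereal" where
  "kl_term a b = (if a = 0 then 0 else if b = 0 then \<infinity> else ereal (a * ln (a / b)))"

definition KL_discrete :: "nat \<Rightarrow> (nat \<Rightarrow> real) \<Rightarrow> (nat \<Rightarrow> real) \<Rightarrow> ereal" where
  "KL_discrete K P Q = (\<Sum>c\<in>{1..K}. kl_term (P c) (Q c))"

text \<open>KL divergence between two densities w.r.t. the reference measure M, i.e. the
  extended-valued Lebesgue integral of P ln(P/Q) (positive part minus negative part).\<close>
definition KL_density :: "'a measure \<Rightarrow> ('a \<Rightarrow> real) \<Rightarrow> ('a \<Rightarrow> real) \<Rightarrow> ereal" where
  "KL_density M P Q =
     enn2ereal (\<integral>\<^sup>+ y. e2ennreal (kl_term (P y) (Q y)) \<partial>M)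
   - enn2ereal (\<integral>\<^sup>+ y. e2ennreal (- kl_term (P y) (Q y)) \<partial>M)"

definition prob_Y :: "'y measure \<Rightarrow> ('y \<Rightarrow> real) \<Rightarrow> 'y set \<Rightarrow> real" where
  "prob_Y MY pY A = (\<integral> y. indicator A y * pY y \<partial>MY)"

definition cond_dens :: "('x \<Rightarrow> 'y \<Rightarrow> real) \<Rightarrow> ('x \<Rightarrow> real) \<Rightarrow> 'x \<Rightarrow> 'y \<Rightarrow> real" where
  "cond_dens p pX x y = p x y / pX x"

definition prob_Y_cond :: "'y measure \<Rightarrow> ('x \<Rightarrow> 'y \<Rightarrow> real) \<Rightarrow> ('x \<Rightarrow> real) \<Rightarrow> 'x \<Rightarrow> 'y set \<Rightarrow> real" where
  "prob_Y_cond MY p pX x A = (\<integral> y. indicator A y * cond_dens p pX x y \<partial>MY)"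

definition class_post_sets ::
  "'y measure \<Rightarrow> ('x \<Rightarrow> 'y \<Rightarrow> real) \<Rightarrow> ('x \<Rightarrow> real) \<Rightarrow> nat \<Rightarrow> (nat \<Rightarrow> 'y set) \<Rightarrow> 'x \<Rightarrow> nat \<Rightarrow> real" where
  "class_post_sets MY p pX K Ys x c =
     prob_Y_cond MY p pX x (Ys c) / prob_Y_cond MY p pX x (\<Union>i\<in>{1..K}. Ys i)"

definition dens_Y_given_set :: "'y measure \<Rightarrow> ('y \<Rightarrow> real) \<Rightarrow> 'y set \<Rightarrow> 'y \<Rightarrow> real" where
  "dens_Y_given_set MY pY A y = indicator A y * pY y / prob_Y MY pY A"

definition dens_Y_given_x_set ::
  "'y measure \<Rightarrow> ('x \<Rightarrow> 'y \<Rightarrow> real) \<Rightarrow> ('x \<Rightarrow> real) \<Rightarrow> 'x \<Rightarrow> 'y set \<Rightarrow> 'y \<Rightarrow> real" where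
  "dens_Y_given_x_set MY p pX x A y =
     indicator A y * cond_dens p pX x y / prob_Y_cond MY p pX x A"

text \<open>The integrand is nonnegative, so it is taken as a nonnegative (possibly infinite) integral.\<close>
definition L_sup ::
  "'x measure \<Rightarrow> ('x \<Rightarrow> real) \<Rightarrow> ('x \<Rightarrow> nat \<Rightarrow> real) \<Rightarrow> nat \<Rightarrow> ('x \<Rightarrow> nat \<Rightarrow> real) \<Rightarrow> ennreal" where
  "L_sup MX pX PC K h =
     (\<integral>\<^sup>+ x. ennreal (pX x * (\<Sum>c\<in>{1..K}.
         PC x c * - ln (exp (h x c) / (\<Sum>i\<in>{1..K}. exp (h x i))))) \<partial>MX)"

end

theory Submission
  imports Defs
begin

text \<open>
  On each class set Y_c the ideal critic satisfies g*(x,y) = ln (p(y|x,Y_c) / p(y|Y_c)) + ln P_Y(Y_c|x)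
  - ln P_Y(Y_c) + \<Gamma>.  Averaging the learned critic g = <f_X(x), f_Y(y)> / \<tau> over p(y|Y_c), which is
  linear in f_X(x), therefore yields logits <W_c, f_X(x)> + b_c lying within [-\<epsilon>2 - \<Delta>, \<Delta>] of
  ln P_Y(Y_c|x): the average of the log-ratio is -KL, and \<Delta> bounds |g - g*|.  Logits that close to
  ln P_Y(Y_c|x) have softmax cross-entropy at most that of the class posterior
  P_C(c|x;(Y_i)) plus \<epsilon>2 + 2\<Delta>, and by Gibbs' inequality this exceeds the cross-entropy of any
  predictor h by at most KL(P_C(\<cdot>|x) || P_C(\<cdot>|x;(Y_i))) \<le> \<epsilon>1.  Integrating over p_X gives the
  bound; it holds for every measurable h.
\<close>

section \<open>Softmax cross-entropy\<close>

lemma gibbs_inequality: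
  fixes P S :: "'a \<Rightarrow> real"
  assumes "finite A" and P_nonneg: "\<And>c. c \<in> A \<Longrightarrow> 0 \<le> P c" and P_sum: "(\<Sum>c\<in>A. P c) = 1"
    and S_pos: "\<And>c. c \<in> A \<Longrightarrow> 0 < S c" and S_sum: "(\<Sum>c\<in>A. S c) = 1"
  shows "(\<Sum>c\<in>A. P c * - ln (P c)) \<le> (\<Sum>c\<in>A. P c * - ln (S c))"
proof -
  have pointwise: "P c * - ln (P c) \<le> P c * - ln (S c) + (S c - P c)" if c: "c \<in> A" for c
  proof (cases "P c = 0")
    case False
    then have Pc: "0 < P c" using P_nonneg[OF c] by simp
    have "P c * ln (S c / P c) \<le> P c * (S c / P c - 1)"
      using Pc S_pos[OF c] by (intro mult_left_mono ln_le_minus_one) auto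
    then show ?thesis using Pc S_pos[OF c] by (simp add: ln_div algebra_simps)
  qed (use S_pos[OF c] in simp)
  have "(\<Sum>c\<in>A. P c * - ln (P c)) \<le> (\<Sum>c\<in>A. P c * - ln (S c) + (S c - P c))"
    by (intro sum_mono pointwise)
  also have "\<dots> = (\<Sum>c\<in>A. P c * - ln (S c))"
    using P_sum S_sum by (simp add: sum.distrib sum_subtractf sum_negf)
  finally show ?thesis .
qed

definition cross_entropy :: "'a set \<Rightarrow> ('a \<Rightarrow> real) \<Rightarrow> ('a \<Rightarrow> real) \<Rightarrow> real" where
  "cross_entropy A P h = (\<Sum>c\<in>A. P c * - ln (exp (h c) / (\<Sum>i\<in>A. exp (h i))))"

lemma cross_entropy_nonneg:
  assumes "finite A" and "\<And>c. c \<in> A \<Longrightarrow> 0 \<le> P c"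
  shows "0 \<le> cross_entropy A P h"
  unfolding cross_entropy_def
proof (intro sum_nonneg)
  fix c assume c: "c \<in> A"
  have le: "exp (h c) \<le> (\<Sum>i\<in>A. exp (h i))"
    using assms(1) c by (intro member_le_sum) auto
  moreover have "0 < exp (h c)" by simp
  ultimately have "0 < (\<Sum>i\<in>A. exp (h i))" by linarith
  with le have "ln (exp (h c) / (\<Sum>i\<in>A. exp (h i))) \<le> 0"
    by (subst ln_le_zero_iff) (auto simp: divide_le_eq_1)
  then show "0 \<le> P c * - ln (exp (h c) / (\<Sum>i\<in>A. exp (h i)))"
    using assms(2)[OF c] by (simp add: mult_nonneg_nonpos)
qed

lemma cross_entropy_le_of_logits_near_ln:
  fixes P r h :: "'a \<Rightarrow> real"
  assumes "finite A" and P_nonneg: "\<And>c. c \<in> A \<Longrightarrow> 0 \<le> P c" and P_sum: "(\<Sum>c\<in>A. P c) = 1"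
    and r_pos: "\<And>c. c \<in> A \<Longrightarrow> 0 < r c"
    and h_lower: "\<And>c. c \<in> A \<Longrightarrow> ln (r c) - a \<le> h c"
    and h_upper: "\<And>c. c \<in> A \<Longrightarrow> h c \<le> ln (r c) + b"
  shows "cross_entropy A P h \<le> (\<Sum>c\<in>A. P c * - ln (r c / (\<Sum>i\<in>A. r i))) + (a + b)"
proof -
  have "A \<noteq> {}" using P_sum by auto
  define R where "R = (\<Sum>i\<in>A. r i)"
  define Z where "Z = (\<Sum>i\<in>A. exp (h i))"
  have R_pos: "0 < R" unfolding R_def using \<open>finite A\<close> \<open>A \<noteq> {}\<close> r_pos by (intro sum_pos) auto
  have Z_pos: "0 < Z" unfolding Z_def using \<open>finite A\<close> \<open>A \<noteq> {}\<close> by (intro sum_pos) auto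
  have "Z \<le> (\<Sum>i\<in>A. exp b * r i)"
    unfolding Z_def
  proof (intro sum_mono)
    fix i assume i: "i \<in> A"
    have "exp (h i) \<le> exp (ln (r i) + b)" using h_upper[OF i] by simp
    then show "exp (h i) \<le> exp b * r i" using r_pos[OF i] by (simp add: exp_add mult.commute)
  qed
  also have "\<dots> = exp b * R" by (simp add: R_def sum_distrib_left)
  finally have "ln Z \<le> ln (exp b * R)" using Z_pos R_pos by simp
  then have "ln Z \<le> b + ln R" using R_pos by (simp add: ln_mult)
  then have "- ln (exp (h c) / Z) \<le> - ln (r c / R) + (a + b)" if c: "c \<in> A" for c
    using Z_pos R_pos r_pos[OF c] h_lower[OF c] by (simp add: ln_div)
  then have "cross_entropy A P h \<le> (\<Sum>c\<in>A. P c * (- ln (r c / R) + (a + b)))"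
    unfolding cross_entropy_def Z_def[symmetric] using P_nonneg by (intro sum_mono mult_left_mono) auto
  also have "\<dots> = (\<Sum>c\<in>A. P c * - ln (r c / R)) + (a + b)"
    by (simp only: distrib_left sum.distrib flip: sum_distrib_right) (simp add: P_sum)
  finally show ?thesis unfolding R_def .
qed

lemma neg_ln_le_KL_plus_cross_entropy:
  fixes P Q h :: "'a \<Rightarrow> real"
  assumes "finite A" and P_nonneg: "\<And>c. c \<in> A \<Longrightarrow> 0 \<le> P c" and P_sum: "(\<Sum>c\<in>A. P c) = 1"
    and Q_pos: "\<And>c. c \<in> A \<Longrightarrow> 0 < Q c"
    and KL: "(\<Sum>c\<in>A. kl_term (P c) (Q c)) \<le> ereal e"
  shows "(\<Sum>c\<in>A. P c * - ln (Q c)) \<le> e + cross_entropy A P h"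
proof -
  have "A \<noteq> {}" using P_sum by auto
  define Z where "Z = (\<Sum>i\<in>A. exp (h i))"
  have Z_pos: "0 < Z" unfolding Z_def using \<open>finite A\<close> \<open>A \<noteq> {}\<close> by (intro sum_pos) auto
  define D where "D c = P c * ln (P c / Q c)" for c
  have "(\<Sum>c\<in>A. kl_term (P c) (Q c)) = (\<Sum>c\<in>A. ereal (D c))"
  proof (rule sum.cong)
    fix c assume "c \<in> A"
    then show "kl_term (P c) (Q c) = ereal (D c)" using Q_pos[of c] by (simp add: kl_term_def D_def)
  qed simp
  with KL have "(\<Sum>c\<in>A. D c) \<le> e" by simp
  moreover have "P c * - ln (Q c) = D c + P c * - ln (P c)" if c: "c \<in> A" for c
    using P_nonneg[OF c] Q_pos[OF c]
    by (cases "P c = 0") (simp_all add: D_def ln_div algebra_simps)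
  then have "(\<Sum>c\<in>A. P c * - ln (Q c)) = (\<Sum>c\<in>A. D c) + (\<Sum>c\<in>A. P c * - ln (P c))"
    by (simp add: sum.distrib sum_subtractf sum_negf)
  moreover have "(\<Sum>c\<in>A. P c * - ln (P c)) \<le> cross_entropy A P h"
    unfolding cross_entropy_def Z_def[symmetric]
    using \<open>finite A\<close> P_nonneg P_sum Z_pos
    by (intro gibbs_inequality) (auto simp: Z_def simp flip: sum_divide_distrib)
  ultimately show ?thesis by linarith
qed

lemma cross_entropy_le_of_KL_and_logit_bounds:
  fixes P r h hs :: "'a \<Rightarrow> real"
  assumes "finite A" and P_nonneg: "\<And>c. c \<in> A \<Longrightarrow> 0 \<le> P c" and P_sum: "(\<Sum>c\<in>A. P c) = 1"
    and r_pos: "\<And>c. c \<in> A \<Longrightarrow> 0 < r c"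
    and KL: "(\<Sum>c\<in>A. kl_term (P c) (r c / (\<Sum>i\<in>A. r i))) \<le> ereal e"
    and h_lower: "\<And>c. c \<in> A \<Longrightarrow> ln (r c) - a \<le> h c"
    and h_upper: "\<And>c. c \<in> A \<Longrightarrow> h c \<le> ln (r c) + b"
  shows "cross_entropy A P h \<le> cross_entropy A P hs + (e + a + b)"
proof -
  have "A \<noteq> {}" using P_sum by auto
  then have "0 < (\<Sum>i\<in>A. r i)" using \<open>finite A\<close> r_pos by (intro sum_pos) auto
  then have "(\<Sum>c\<in>A. P c * - ln (r c / (\<Sum>i\<in>A. r i))) \<le> e + cross_entropy A P hs"
    using assms by (intro neg_ln_le_KL_plus_cross_entropy) auto
  moreover have "cross_entropy A P h \<le> (\<Sum>c\<in>A. P c * - ln (r c / (\<Sum>i\<in>A. r i))) + (a + b)"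
    using assms by (intro cross_entropy_le_of_logits_near_ln) auto
  ultimately show ?thesis by linarith
qed

section \<open>Log-likelihood ratios of probability densities\<close>

lemma normalized_indicator_density:
  fixes f :: "'a \<Rightarrow> real"
  assumes pos: "0 < (\<integral>y. indicator A y * f y \<partial>M)"
  shows "integrable M (\<lambda>y. indicator A y * f y / (\<integral>y. indicator A y * f y \<partial>M))"
    and "(\<integral>y. indicator A y * f y / (\<integral>y. indicator A y * f y \<partial>M) \<partial>M) = 1"
proof -
  have "integrable M (\<lambda>y. indicator A y * f y)"
    using pos not_integrable_integral_eq by fastforce
  then show "integrable M (\<lambda>y. indicator A y * f y / (\<integral>y. indicator A y * f y \<partial>M))"
    by simp
  show "(\<integral>y. indicator A y * f y / (\<integral>y. indicator A y * f y \<partial>M) \<partial>M) = 1"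
    using pos by simp
qed

definition kl_integrand :: "real \<Rightarrow> real \<Rightarrow> real" where
  "kl_integrand a b = (if 0 < a then a * ln (a / b) else 0)"

lemma kl_term_eq_kl_integrand:
  "0 \<le> a \<Longrightarrow> (0 < a \<Longrightarrow> 0 < b) \<Longrightarrow> kl_term a b = ereal (kl_integrand a b)"
  by (cases "a = 0") (auto simp: kl_term_def kl_integrand_def)

lemma diff_le_kl_integrand:
  assumes "0 \<le> a" "0 \<le> b" and supp: "0 < a \<Longrightarrow> 0 < b"
  shows "a - b \<le> kl_integrand a b"
proof (cases "0 < a")
  case True
  have "a * (1 - b / a) \<le> a * ln (a / b)"
  proof (rule mult_left_mono)
    have "ln (b / a) \<le> b / a - 1" using True supp by (intro ln_le_minus_one) simp
    then show "1 - b / a \<le> ln (a / b)" using True supp by (simp add: ln_div)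
  qed (use True in simp)
  then show ?thesis using True by (simp add: kl_integrand_def algebra_simps)
qed (use assms in \<open>simp add: kl_integrand_def\<close>)

lemma KL_density_eq_integral:
  fixes \<mu> \<nu> :: "'a \<Rightarrow> real"
  assumes [measurable]: "\<mu> \<in> borel_measurable M" "\<nu> \<in> borel_measurable M"
    and \<mu>_nonneg: "\<And>y. 0 \<le> \<mu> y" and \<nu>_nonneg: "\<And>y. 0 \<le> \<nu> y" and supp: "\<And>y. 0 < \<mu> y \<Longrightarrow> 0 < \<nu> y"
    and \<nu>_int: "integrable M \<nu>" and finite: "KL_density M \<mu> \<nu> < \<infinity>"
  shows "integrable M (\<lambda>y. kl_integrand (\<mu> y) (\<nu> y))"
    and "KL_density M \<mu> \<nu> = ereal (\<integral>y. kl_integrand (\<mu> y) (\<nu> y) \<partial>M)"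
proof -
  define F where "F y = kl_integrand (\<mu> y) (\<nu> y)" for y
  have [measurable]: "F \<in> borel_measurable M" unfolding F_def kl_integrand_def by measurable
  have ereal_of_finite: "enn2ereal a = ereal (enn2real a)" if "a < \<infinity>" for a :: ennreal
  proof -
    have "a = ennreal (enn2real a)" using that by simp
    then have "enn2ereal a = enn2ereal (ennreal (enn2real a))" by (rule arg_cong)
    then show ?thesis by simp
  qed
  have KL_eq: "KL_density M \<mu> \<nu> = enn2ereal (\<integral>\<^sup>+ y. ennreal (F y) \<partial>M) - enn2ereal (\<integral>\<^sup>+ y. ennreal (- F y) \<partial>M)"
    unfolding KL_density_def F_def using \<mu>_nonneg supp by (simp add: kl_term_eq_kl_integrand)
  have "(\<integral>\<^sup>+ y. ennreal (- F y) \<partial>M) \<le> (\<integral>\<^sup>+ y. ennreal (\<nu> y) \<partial>M)"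
  proof (intro nn_integral_mono ennreal_leI)
    fix y show "- F y \<le> \<nu> y"
      using diff_le_kl_integrand[of "\<mu> y" "\<nu> y"] \<mu>_nonneg[of y] \<nu>_nonneg[of y] supp[of y]
      by (simp add: F_def)
  qed
  also have "\<dots> < \<infinity>" using integrableD(2)[OF \<nu>_int] by (simp add: less_top)
  finally have neg_finite: "(\<integral>\<^sup>+ y. ennreal (- F y) \<partial>M) < \<infinity>" .
  have pos_finite: "(\<integral>\<^sup>+ y. ennreal (F y) \<partial>M) < \<infinity>"
  proof (rule ccontr)
    assume "\<not> ?thesis"
    then have "(\<integral>\<^sup>+ y. ennreal (F y) \<partial>M) = \<infinity>" by (simp add: less_top[symmetric])
    then have "KL_density M \<mu> \<nu> = \<infinity>" by (simp add: KL_eq ereal_of_finite[OF neg_finite])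
    with finite show False by simp
  qed
  show F_int: "integrable M (\<lambda>y. kl_integrand (\<mu> y) (\<nu> y))"
    using pos_finite neg_finite unfolding F_def[symmetric] real_integrable_def by auto
  show "KL_density M \<mu> \<nu> = ereal (\<integral>y. kl_integrand (\<mu> y) (\<nu> y) \<partial>M)"
    using pos_finite neg_finite F_int unfolding F_def[symmetric]
    by (simp add: KL_eq ereal_of_finite real_lebesgue_integral_def)
qed

lemma integral_kl_integrand_nonneg:
  fixes \<mu> \<nu> :: "'a \<Rightarrow> real"
  assumes \<mu>_nonneg: "\<And>y. 0 \<le> \<mu> y" and \<nu>_nonneg: "\<And>y. 0 \<le> \<nu> y" and supp: "\<And>y. 0 < \<mu> y \<Longrightarrow> 0 < \<nu> y"
    and "integrable M \<mu>" "integrable M \<nu>" "integral\<^sup>L M \<mu> = 1" "integral\<^sup>L M \<nu> = 1"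
    and "integrable M (\<lambda>y. kl_integrand (\<mu> y) (\<nu> y))"
  shows "0 \<le> (\<integral>y. kl_integrand (\<mu> y) (\<nu> y) \<partial>M)"
proof -
  have "(\<integral>y. \<mu> y - \<nu> y \<partial>M) \<le> (\<integral>y. kl_integrand (\<mu> y) (\<nu> y) \<partial>M)"
    using assms diff_le_kl_integrand by (intro integral_mono) auto
  then show ?thesis using assms by simp
qed

text \<open>The \<mu>-mean of ln (\<nu>/\<mu>) is -KL(\<mu>||\<nu>), which lies in [-e, 0].\<close>
lemma integral_near_log_density_ratio:
  fixes \<mu> \<nu> g :: "'a \<Rightarrow> real"
  assumes \<mu>_nonneg: "\<And>y. 0 \<le> \<mu> y" and \<nu>_nonneg: "\<And>y. 0 \<le> \<nu> y" and supp: "\<And>y. 0 < \<mu> y \<Longrightarrow> 0 < \<nu> y"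
    and \<mu>_int: "integrable M \<mu>" and \<nu>_int: "integrable M \<nu>"
    and \<mu>_one: "integral\<^sup>L M \<mu> = 1" and \<nu>_one: "integral\<^sup>L M \<nu> = 1"
    and KL: "KL_density M \<mu> \<nu> \<le> ereal e"
    and g_meas [measurable]: "g \<in> borel_measurable M"
    and near: "\<And>y. 0 < \<mu> y \<Longrightarrow> \<bar>g y - (ln (\<nu> y / \<mu> y) + C)\<bar> \<le> D"
  shows "integrable M (\<lambda>y. \<mu> y * g y)"
    and "C - D - e \<le> (\<integral>y. \<mu> y * g y \<partial>M)"
    and "(\<integral>y. \<mu> y * g y \<partial>M) \<le> C + D"
proof -
  have \<mu>_meas [measurable]: "\<mu> \<in> borel_measurable M" and \<nu>_meas [measurable]: "\<nu> \<in> borel_measurable M"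
    using \<mu>_int \<nu>_int by auto
  have KL_finite: "KL_density M \<mu> \<nu> < \<infinity>" using KL by (cases "KL_density M \<mu> \<nu>") auto
  define F where "F y = kl_integrand (\<mu> y) (\<nu> y)" for y
  note KL_density_F = KL_density_eq_integral[OF \<mu>_meas \<nu>_meas \<mu>_nonneg \<nu>_nonneg supp \<nu>_int KL_finite]
  have F_int: "integrable M F" unfolding F_def by (rule KL_density_F(1))
  have KL_eq: "KL_density M \<mu> \<nu> = ereal (integral\<^sup>L M F)" unfolding F_def by (rule KL_density_F(2))
  have F_le: "integral\<^sup>L M F \<le> e" using KL unfolding KL_eq by simp
  have F_nonneg: "0 \<le> integral\<^sup>L M F"
    unfolding F_def
    by (rule integral_kl_integrand_nonneg[OF \<mu>_nonneg \<nu>_nonneg supp \<mu>_int \<nu>_int \<mu>_one \<nu>_one F_int[unfolded F_def]])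
  define lo where "lo y = \<mu> y * (C - D) - F y" for y
  define up where "up y = \<mu> y * (C + D) - F y" for y
  have sandwich: "lo y \<le> \<mu> y * g y \<and> \<mu> y * g y \<le> up y" for y
  proof (cases "0 < \<mu> y")
    case True
    then have "F y = - \<mu> y * ln (\<nu> y / \<mu> y)"
      using supp[OF True] by (simp add: F_def kl_integrand_def ln_div algebra_simps)
    moreover have "C - D \<le> g y - ln (\<nu> y / \<mu> y)" "g y - ln (\<nu> y / \<mu> y) \<le> C + D"
      using near[OF True] unfolding abs_le_iff by linarith+
    then have "\<mu> y * (C - D) \<le> \<mu> y * (g y - ln (\<nu> y / \<mu> y))"
      "\<mu> y * (g y - ln (\<nu> y / \<mu> y)) \<le> \<mu> y * (C + D)"
      using True by (simp_all add: mult_left_mono)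
    ultimately show ?thesis by (simp add: lo_def up_def algebra_simps)
  next
    case False
    then have "\<mu> y = 0" using \<mu>_nonneg[of y] by simp
    then show ?thesis by (simp add: lo_def up_def F_def kl_integrand_def)
  qed
  have lo_int: "integrable M lo" and up_int: "integrable M up"
    unfolding lo_def up_def using \<mu>_int F_int by auto
  show \<mu>g_int: "integrable M (\<lambda>y. \<mu> y * g y)"
  proof (rule Bochner_Integration.integrable_bound)
    show "integrable M (\<lambda>y. \<bar>lo y\<bar> + \<bar>up y\<bar>)" using lo_int up_int by auto
    show "AE y in M. norm (\<mu> y * g y) \<le> norm (\<bar>lo y\<bar> + \<bar>up y\<bar>)"
    proof (rule AE_I2)
      fix y
      have "\<bar>\<mu> y * g y\<bar> \<le> \<bar>lo y\<bar> + \<bar>up y\<bar>"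
        using sandwich[of y] abs_ge_self[of "up y"] abs_ge_minus_self[of "lo y"] abs_ge_zero[of "lo y"]
        by (intro abs_leI) linarith+
      then show "norm (\<mu> y * g y) \<le> norm (\<bar>lo y\<bar> + \<bar>up y\<bar>)" by simp
    qed
  qed measurable
  have "integral\<^sup>L M lo = (C - D) - integral\<^sup>L M F" "integral\<^sup>L M up = (C + D) - integral\<^sup>L M F"
    unfolding lo_def up_def using \<mu>_int F_int \<mu>_one by simp_all
  moreover have "integral\<^sup>L M lo \<le> (\<integral>y. \<mu> y * g y \<partial>M)" "(\<integral>y. \<mu> y * g y \<partial>M) \<le> integral\<^sup>L M up"
    using sandwich by (intro integral_mono lo_int up_int \<mu>g_int; simp)+
  ultimately show "C - D - e \<le> (\<integral>y. \<mu> y * g y \<partial>M)" "(\<integral>y. \<mu> y * g y \<partial>M) \<le> C + D"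
    using F_le F_nonneg by linarith+
qed

text \<open>The vector integral of \<mu> f need not exist; only the scalar integrals along V are assumed,
  so the representing vector is obtained by extending linearly from a basis inside V.\<close>
lemma ex_inner_representation_of_integral:
  fixes V :: "'a::euclidean_space set" and f :: "'b \<Rightarrow> 'a" and \<mu> :: "'b \<Rightarrow> real"
  assumes int: "\<And>v. v \<in> V \<Longrightarrow> integrable M (\<lambda>y. \<mu> y * (v \<bullet> f y))"
  shows "\<exists>w. \<forall>v\<in>V. w \<bullet> v = (\<integral>y. \<mu> y * (v \<bullet> f y) \<partial>M)"
proof -
  obtain B where B: "B \<subseteq> V" "independent B" "V \<subseteq> span B"
    by (rule maximal_independent_subset)
  define I where "I v = (\<integral>y. \<mu> y * (v \<bullet> f y) \<partial>M)" for v
  obtain g where g: "linear g" "\<And>b. b \<in> B \<Longrightarrow> g b = I b"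
    using linear_independent_extend[OF B(2)] by blast
  have "integrable M (\<lambda>y. \<mu> y * (v \<bullet> f y)) \<and> I v = g v" if "v \<in> span B" for v
    using that
  proof (induction rule: span_induct_alt)
    case base
    then show ?case using linear_0[OF g(1)] by (simp add: I_def)
  next
    case (step c b v)
    have ib: "integrable M (\<lambda>y. \<mu> y * (b \<bullet> f y))" using int B(1) step(1) by blast
    have iv: "integrable M (\<lambda>y. \<mu> y * (v \<bullet> f y))" and Iv: "I v = g v" using step(2) by auto
    have eq: "(\<lambda>y. \<mu> y * ((c *\<^sub>R b + v) \<bullet> f y)) = (\<lambda>y. c * (\<mu> y * (b \<bullet> f y)) + \<mu> y * (v \<bullet> f y))"
      by (auto simp: inner_add_left algebra_simps)
    have "I (c *\<^sub>R b + v) = c * I b + I v"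
      unfolding I_def eq using ib iv by simp
    also have "\<dots> = g (c *\<^sub>R b + v)"
      using g(2)[OF step(1)] Iv linear_add[OF g(1)] linear_scale[OF g(1)] by simp
    finally show ?case using ib iv unfolding eq by simp
  qed
  then have "adjoint g 1 \<bullet> v = I v" if "v \<in> V" for v
    using that B(3) adjoint_works[OF g(1), of v 1] by (auto simp: inner_commute)
  then show ?thesis unfolding I_def by blast
qed

section \<open>Class-conditional densities and the linear probe\<close>

lemma integrable_cond_dens:
  assumes p_meas: "(\<lambda>(x, y). p x y) \<in> borel_measurable (MX \<Otimes>\<^sub>M MY)" and x: "x \<in> space MX"
    and p_nonneg: "\<And>y. 0 \<le> p x y" and pX_nonneg: "0 \<le> pX x"
    and pX_marg: "(\<integral>\<^sup>+ y. ennreal (p x y) \<partial>MY) = ennreal (pX x)"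
  shows "integrable MY (\<lambda>y. cond_dens p pX x y)"
proof -
  have "(\<lambda>y. p x y) \<in> borel_measurable MY"
    using measurable_Pair2[OF p_meas x] by simp
  then have "has_bochner_integral MY (\<lambda>y. p x y) (pX x)"
    using p_nonneg by (intro has_bochner_integral_nn_integral[OF _ _ pX_nonneg pX_marg]) auto
  then have "integrable MY (\<lambda>y. p x y)" by (rule integrable.intros)
  then show ?thesis by (simp add: cond_dens_def)
qed

lemma prob_Y_cond_UN_disjoint:
  assumes int: "integrable MY (\<lambda>y. cond_dens p pX x y)" and "finite I"
    and disj: "disjoint_family_on Ys I" and sets: "\<And>i. i \<in> I \<Longrightarrow> Ys i \<in> sets MY"
  shows "prob_Y_cond MY p pX x (\<Union>i\<in>I. Ys i) = (\<Sum>i\<in>I. prob_Y_cond MY p pX x (Ys i))"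
proof -
  have "prob_Y_cond MY p pX x (\<Union>i\<in>I. Ys i)
      = (\<integral>y. (\<Sum>i\<in>I. indicator (Ys i) y * cond_dens p pX x y) \<partial>MY)"
    unfolding prob_Y_cond_def indicator_UN_disjoint[OF \<open>finite I\<close> disj]
    by (simp add: sum_distrib_right)
  also have "\<dots> = (\<Sum>i\<in>I. prob_Y_cond MY p pX x (Ys i))"
    unfolding prob_Y_cond_def
    using integrable_mult_indicator[OF sets int] by (intro Bochner_Integration.integral_sum) auto
  finally show ?thesis .
qed

lemma prob_Y_cond_pos:
  assumes int: "integrable MY (\<lambda>y. cond_dens p pX x y)" and A: "A \<in> sets MY"
    and p_nonneg: "\<And>y. 0 \<le> p x y" and pX_pos: "0 < pX x" and pY_nonneg: "\<And>y. 0 \<le> pY y"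
    and supp: "\<And>y. y \<in> A \<Longrightarrow> 0 < pY y \<Longrightarrow> 0 < p x y"
    and P_pos: "0 < prob_Y MY pY A"
  shows "0 < prob_Y_cond MY p pX x A"
proof (rule ccontr)
  have qA_int: "integrable MY (\<lambda>y. indicator A y * cond_dens p pX x y)"
    using integrable_mult_indicator[OF A int] by simp
  have pYA_int: "integrable MY (\<lambda>y. indicator A y * pY y)"
    using P_pos not_integrable_integral_eq unfolding prob_Y_def by fastforce
  have qA_nonneg: "0 \<le> indicator A y * cond_dens p pX x y" for y
    using p_nonneg[of y] pX_pos by (simp add: cond_dens_def)
  have pYA_vanishes: "indicator A y * pY y = 0" if "indicator A y * cond_dens p pX x y = 0" for y
  proof (cases "y \<in> A \<and> 0 < pY y")
    case True
    then show ?thesis using that supp[of y] pX_pos by (simp add: cond_dens_def)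
  qed (use pY_nonneg[of y] in auto)
  assume "\<not> 0 < prob_Y_cond MY p pX x A"
  moreover have "0 \<le> prob_Y_cond MY p pX x A"
    unfolding prob_Y_cond_def using qA_nonneg by (intro integral_nonneg_AE) auto
  ultimately have "AE y in MY. indicator A y * cond_dens p pX x y = 0"
    using integral_nonneg_eq_0_iff_AE[OF qA_int] qA_nonneg unfolding prob_Y_cond_def by auto
  then have "AE y in MY. indicator A y * pY y = 0"
    by eventually_elim (rule pYA_vanishes)
  then have "prob_Y MY pY A = 0"
    using integral_nonneg_eq_0_iff_AE[OF pYA_int] pY_nonneg unfolding prob_Y_def by auto
  with P_pos show False by simp
qed

lemma cross_entropy_le_of_class_post_sets:
  fixes P h hs :: "nat \<Rightarrow> real"
  assumes int: "integrable MY (\<lambda>y. cond_dens p pX x y)"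
    and Ys_sets: "\<And>c. c \<in> {1..K} \<Longrightarrow> Ys c \<in> sets MY" and Ys_disj: "disjoint_family_on Ys {1..K}"
    and r_pos: "\<And>c. c \<in> {1..K} \<Longrightarrow> 0 < prob_Y_cond MY p pX x (Ys c)"
    and P_nonneg: "\<And>c. 0 \<le> P c" and P_sum: "(\<Sum>c\<in>{1..K}. P c) = 1"
    and KL: "KL_discrete K P (class_post_sets MY p pX K Ys x) \<le> ereal e"
    and h_lower: "\<And>c. c \<in> {1..K} \<Longrightarrow> ln (prob_Y_cond MY p pX x (Ys c)) - a \<le> h c"
    and h_upper: "\<And>c. c \<in> {1..K} \<Longrightarrow> h c \<le> ln (prob_Y_cond MY p pX x (Ys c)) + b"
  shows "cross_entropy {1..K} P h \<le> cross_entropy {1..K} P hs + (e + a + b)"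
proof (rule cross_entropy_le_of_KL_and_logit_bounds[where r="\<lambda>c. prob_Y_cond MY p pX x (Ys c)"])
  have "prob_Y_cond MY p pX x (\<Union>i\<in>{1..K}. Ys i) = (\<Sum>i\<in>{1..K}. prob_Y_cond MY p pX x (Ys i))"
    by (rule prob_Y_cond_UN_disjoint[OF int]; fact finite_atLeastAtMost Ys_disj Ys_sets)
  then show "(\<Sum>c\<in>{1..K}. kl_term (P c) (prob_Y_cond MY p pX x (Ys c) /
      (\<Sum>i\<in>{1..K}. prob_Y_cond MY p pX x (Ys i)))) \<le> ereal e"
    using KL by (simp add: KL_discrete_def class_post_sets_def)
qed (use P_nonneg P_sum r_pos h_lower h_upper in auto)

lemma ln_dens_Y_given_x_set_ratio:
  assumes "y \<in> A" and "0 < pY y" "0 < p x y" "0 < pX x"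
    and "0 < prob_Y MY pY A" "0 < prob_Y_cond MY p pX x A"
  shows "ln (dens_Y_given_x_set MY p pX x A y / dens_Y_given_set MY pY A y)
      = ln (p x y / (pX x * pY y)) + ln (prob_Y MY pY A) - ln (prob_Y_cond MY p pX x A)"
proof -
  have "dens_Y_given_x_set MY p pX x A y / dens_Y_given_set MY pY A y
      = (p x y / (pX x * pY y)) * (prob_Y MY pY A / prob_Y_cond MY p pX x A)"
    using assms by (simp add: dens_Y_given_x_set_def dens_Y_given_set_def cond_dens_def field_simps)
  then show ?thesis using assms by (simp add: ln_mult ln_div)
qed

lemma class_logit_integral_bounds:
  fixes g :: "'y \<Rightarrow> real"
  assumes int: "integrable MY (\<lambda>y. cond_dens p pX x y)" and A: "A \<in> sets MY"
    and p_nonneg: "\<And>y. 0 \<le> p x y" and pX_pos: "0 < pX x" and pY_nonneg: "\<And>y. 0 \<le> pY y"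
    and P_pos: "0 < prob_Y MY pY A"
    and KL: "KL_density MY (dens_Y_given_set MY pY A) (dens_Y_given_x_set MY p pX x A) \<le> ereal e"
    and g_meas: "g \<in> borel_measurable MY"
    and near: "\<And>y. 0 < pY y \<Longrightarrow> 0 < p x y \<and> \<bar>g y - (ln (p x y / (pX x * pY y)) + \<Gamma>)\<bar> \<le> D"
  defines "C \<equiv> ln (prob_Y_cond MY p pX x A) - ln (prob_Y MY pY A) + \<Gamma>"
  shows "integrable MY (\<lambda>y. dens_Y_given_set MY pY A y * g y)"
    and "C - D - e \<le> (\<integral>y. dens_Y_given_set MY pY A y * g y \<partial>MY)"
    and "(\<integral>y. dens_Y_given_set MY pY A y * g y \<partial>MY) \<le> C + D"
proof -
  define P where "P = prob_Y MY pY A"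
  define R where "R = prob_Y_cond MY p pX x A"
  define \<mu> where "\<mu> = dens_Y_given_set MY pY A"
  define \<nu> where "\<nu> = dens_Y_given_x_set MY p pX x A"
  have R_pos: "0 < R"
    unfolding R_def using near by (intro prob_Y_cond_pos[OF int A p_nonneg pX_pos pY_nonneg _ P_pos]) blast
  have \<mu>_eq: "\<mu> = (\<lambda>y. indicator A y * pY y / P)"
    by (simp add: \<mu>_def P_def dens_Y_given_set_def[abs_def])
  have \<nu>_eq: "\<nu> = (\<lambda>y. indicator A y * cond_dens p pX x y / R)"
    by (simp add: \<nu>_def R_def dens_Y_given_x_set_def[abs_def])
  have \<mu>_density: "integrable MY \<mu>" "integral\<^sup>L MY \<mu> = 1"
    using normalized_indicator_density[where A=A and f=pY and M=MY] P_pos unfolding \<mu>_eq P_def prob_Y_def by auto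
  have \<nu>_density: "integrable MY \<nu>" "integral\<^sup>L MY \<nu> = 1"
    using normalized_indicator_density[where A=A and f="cond_dens p pX x" and M=MY] R_pos
    unfolding \<nu>_eq R_def prob_Y_cond_def by auto
  have \<mu>_nonneg: "0 \<le> \<mu> y" for y using P_pos pY_nonneg[of y] by (simp add: \<mu>_eq P_def)
  have \<nu>_nonneg: "0 \<le> \<nu> y" for y
    using R_pos p_nonneg[of y] pX_pos by (simp add: \<nu>_eq cond_dens_def)
  have supp: "y \<in> A \<and> 0 < pY y" if "0 < \<mu> y" for y
    using that pY_nonneg[of y] by (cases "y \<in> A") (auto simp: \<mu>_eq zero_less_divide_iff)
  have \<nu>_pos: "0 < \<nu> y" if "0 < \<mu> y" for y
    using supp[OF that] near R_pos pX_pos by (simp add: \<nu>_eq cond_dens_def)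
  have "\<bar>g y - (ln (\<nu> y / \<mu> y) + C)\<bar> \<le> D" if "0 < \<mu> y" for y
  proof -
    from supp[OF that] have "y \<in> A" "0 < pY y" "0 < p x y" using near by auto
    with pX_pos P_pos R_pos have "ln (\<nu> y / \<mu> y) + C = ln (p x y / (pX x * pY y)) + \<Gamma>"
      unfolding \<mu>_def \<nu>_def C_def R_def by (simp add: ln_dens_Y_given_x_set_ratio)
    then show ?thesis using near \<open>0 < pY y\<close> by simp
  qed
  note near' = this
  have KL': "KL_density MY \<mu> \<nu> \<le> ereal e" using KL unfolding \<mu>_def \<nu>_def .
  show "integrable MY (\<lambda>y. dens_Y_given_set MY pY A y * g y)"
    and "C - D - e \<le> (\<integral>y. dens_Y_given_set MY pY A y * g y \<partial>MY)"
    and "(\<integral>y. dens_Y_given_set MY pY A y * g y \<partial>MY) \<le> C + D"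
    unfolding \<mu>_def[symmetric]
    by (rule integral_near_log_density_ratio[where \<nu>=\<nu>];
        fact \<mu>_nonneg \<nu>_nonneg \<nu>_pos \<mu>_density \<nu>_density KL' g_meas near')+
qed

lemma ex_linear_logits_near_ln_prob_Y_cond:
  fixes fX :: "'x \<Rightarrow> 'v::euclidean_space" and fY :: "'y \<Rightarrow> 'v" and \<tau> :: real
  assumes p_meas: "(\<lambda>(x, y). p x y) \<in> borel_measurable (MX \<Otimes>\<^sub>M MY)"
    and p_nonneg: "\<And>x y. 0 \<le> p x y" and pY_nonneg: "\<And>y. 0 \<le> pY y"
    and pX_marg: "\<And>x. (\<integral>\<^sup>+ y. ennreal (p x y) \<partial>MY) = ennreal (pX x)"
    and fY_meas [measurable]: "fY \<in> borel_measurable MY"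
    and Ys_sets: "\<And>c. c \<in> I \<Longrightarrow> Ys c \<in> sets MY"
    and Ys_pos: "\<And>c. c \<in> I \<Longrightarrow> 0 < prob_Y MY pY (Ys c)"
    and KL: "\<And>x c. 0 < pX x \<Longrightarrow> c \<in> I \<Longrightarrow>
       KL_density MY (dens_Y_given_set MY pY (Ys c)) (dens_Y_given_x_set MY p pX x (Ys c)) \<le> ereal \<epsilon>"
    and approx: "\<And>x y. 0 < pX x \<Longrightarrow> 0 < pY y \<Longrightarrow>
       0 < p x y \<and> \<bar>(fX x \<bullet> fY y) / \<tau> - (ln (p x y / (pX x * pY y)) + \<Gamma>)\<bar> \<le> \<Delta>"
  shows "\<exists>W b. \<forall>c\<in>I. \<forall>x\<in>space MX. 0 < pX x \<longrightarrow>
     ln (prob_Y_cond MY p pX x (Ys c)) - (\<epsilon> + \<Delta>) \<le> W c \<bullet> fX x + b c \<and>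
     W c \<bullet> fX x + b c \<le> ln (prob_Y_cond MY p pX x (Ys c)) + \<Delta>"
proof -
  define \<mu> where "\<mu> c = dens_Y_given_set MY pY (Ys c)" for c
  define m where "m c x = (\<integral>y. \<mu> c y * ((fX x \<bullet> fY y) / \<tau>) \<partial>MY)" for c x
  define S where "S = {x \<in> space MX. 0 < pX x}"
  have bounds: "integrable MY (\<lambda>y. \<mu> c y * ((fX x \<bullet> fY y) / \<tau>))"
      "ln (prob_Y_cond MY p pX x (Ys c)) - ln (prob_Y MY pY (Ys c)) + \<Gamma> - \<Delta> - \<epsilon> \<le> m c x"
      "m c x \<le> ln (prob_Y_cond MY p pX x (Ys c)) - ln (prob_Y MY pY (Ys c)) + \<Gamma> + \<Delta>"
    if c: "c \<in> I" and x: "x \<in> S" for c x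
  proof -
    from x have x_space: "x \<in> space MX" and pX_pos: "0 < pX x" by (auto simp: S_def)
    have int: "integrable MY (\<lambda>y. cond_dens p pX x y)"
      by (rule integrable_cond_dens[where p=p and pX=pX, OF p_meas x_space])
        (simp_all add: p_nonneg pX_marg less_imp_le[OF pX_pos])
    have g_meas: "(\<lambda>y. (fX x \<bullet> fY y) / \<tau>) \<in> borel_measurable MY" by measurable
    show "integrable MY (\<lambda>y. \<mu> c y * ((fX x \<bullet> fY y) / \<tau>))"
      "ln (prob_Y_cond MY p pX x (Ys c)) - ln (prob_Y MY pY (Ys c)) + \<Gamma> - \<Delta> - \<epsilon> \<le> m c x"
      "m c x \<le> ln (prob_Y_cond MY p pX x (Ys c)) - ln (prob_Y MY pY (Ys c)) + \<Gamma> + \<Delta>"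
      unfolding \<mu>_def m_def
      by (rule class_logit_integral_bounds[where e=\<epsilon>];
          fact int Ys_sets[OF c] p_nonneg pX_pos pY_nonneg Ys_pos[OF c] KL[OF pX_pos c] g_meas
            approx[OF pX_pos])+
  qed
  have "\<forall>c\<in>I. \<exists>w. \<forall>x\<in>S. w \<bullet> fX x = m c x"
  proof
    fix c assume c: "c \<in> I"
    have scaled: "(\<lambda>y. \<mu> c y * (v \<bullet> (fY y /\<^sub>R \<tau>))) = (\<lambda>y. \<mu> c y * ((v \<bullet> fY y) / \<tau>))" for v
      by (simp add: divide_inverse ac_simps)
    have "\<exists>w. \<forall>v\<in>fX ` S. w \<bullet> v = (\<integral>y. \<mu> c y * (v \<bullet> (fY y /\<^sub>R \<tau>)) \<partial>MY)"
    proof (rule ex_inner_representation_of_integral)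
      fix v assume "v \<in> fX ` S"
      then obtain x where "x \<in> S" "v = fX x" by blast
      then show "integrable MY (\<lambda>y. \<mu> c y * (v \<bullet> (fY y /\<^sub>R \<tau>)))"
        unfolding scaled using bounds(1)[OF c] by simp
    qed
    then have "\<exists>w. \<forall>v\<in>fX ` S. w \<bullet> v = (\<integral>y. \<mu> c y * ((v \<bullet> fY y) / \<tau>) \<partial>MY)"
      unfolding scaled .
    then show "\<exists>w. \<forall>x\<in>S. w \<bullet> fX x = m c x" unfolding m_def by blast
  qed
  then obtain W where W: "\<And>c x. c \<in> I \<Longrightarrow> x \<in> S \<Longrightarrow> W c \<bullet> fX x = m c x"
    by (metis bchoice)
  show ?thesis
  proof (intro exI[of _ W] exI[of _ "\<lambda>c. ln (prob_Y MY pY (Ys c)) - \<Gamma>"] ballI impI)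
    fix c x assume "c \<in> I" "x \<in> space MX" "0 < pX x"
    then have "c \<in> I" "x \<in> S" by (auto simp: S_def)
    from bounds[OF this] W[OF this]
    show "ln (prob_Y_cond MY p pX x (Ys c)) - (\<epsilon> + \<Delta>) \<le> W c \<bullet> fX x + (ln (prob_Y MY pY (Ys c)) - \<Gamma>) \<and>
       W c \<bullet> fX x + (ln (prob_Y MY pY (Ys c)) - \<Gamma>) \<le> ln (prob_Y_cond MY p pX x (Ys c)) + \<Delta>"
      by linarith
  qed
qed

section \<open>The supervised loss\<close>

lemma nn_integral_marginal_eq_1:
  assumes "sigma_finite_measure MY"
    and p_meas: "(\<lambda>(x, y). p x y) \<in> borel_measurable (MX \<Otimes>\<^sub>M MY)"
    and p_total: "(\<integral>\<^sup>+ z. ennreal (case z of (x, y) \<Rightarrow> p x y) \<partial>(MX \<Otimes>\<^sub>M MY)) = 1"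
    and pX_marg: "\<And>x. (\<integral>\<^sup>+ y. ennreal (p x y) \<partial>MY) = ennreal (pX x)"
  shows "(\<integral>\<^sup>+ x. ennreal (pX x) \<partial>MX) = 1"
proof -
  have [measurable]: "(\<lambda>z. ennreal (case z of (x, y) \<Rightarrow> p x y)) \<in> borel_measurable (MX \<Otimes>\<^sub>M MY)"
    using p_meas by measurable
  have "(\<integral>\<^sup>+ x. ennreal (pX x) \<partial>MX) = (\<integral>\<^sup>+ x. \<integral>\<^sup>+ y. ennreal (case (x, y) of (x, y) \<Rightarrow> p x y) \<partial>MY \<partial>MX)"
    using pX_marg by simp
  also have "\<dots> = (\<integral>\<^sup>+ z. ennreal (case z of (x, y) \<Rightarrow> p x y) \<partial>(MX \<Otimes>\<^sub>M MY))"
    by (rule sigma_finite_measure.nn_integral_fst[OF assms(1)]) measurable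
  finally show ?thesis using p_total by simp
qed

lemma L_sup_le_add_of_pointwise:
  fixes h hs :: "'x \<Rightarrow> nat \<Rightarrow> real"
  assumes pX_meas [measurable]: "pX \<in> borel_measurable MX" and pX_nonneg: "\<And>x. 0 \<le> pX x"
    and pX_total: "(\<integral>\<^sup>+ x. ennreal (pX x) \<partial>MX) = 1"
    and PC_meas [measurable]: "\<And>c. (\<lambda>x. PC x c) \<in> borel_measurable MX"
    and PC_nonneg: "\<And>x c. 0 \<le> PC x c"
    and hs_meas [measurable]: "\<And>c. (\<lambda>x. hs x c) \<in> borel_measurable MX" and "0 \<le> \<epsilon>"
    and pointwise: "\<And>x. x \<in> space MX \<Longrightarrow> 0 < pX x \<Longrightarrow>
       cross_entropy {1..K} (PC x) (h x) \<le> cross_entropy {1..K} (PC x) (hs x) + \<epsilon>"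
  shows "L_sup MX pX PC K h \<le> L_sup MX pX PC K hs + ennreal \<epsilon>"
proof -
  define CE where "CE h x = cross_entropy {1..K} (PC x) (h x)" for h :: "'x \<Rightarrow> nat \<Rightarrow> real" and x
  have L_eq: "L_sup MX pX PC K h = (\<integral>\<^sup>+ x. ennreal (pX x * CE h x) \<partial>MX)" for h
    by (simp add: L_sup_def CE_def cross_entropy_def)
  have [measurable]: "CE hs \<in> borel_measurable MX"
    unfolding CE_def[abs_def] cross_entropy_def by measurable
  have "L_sup MX pX PC K h \<le> (\<integral>\<^sup>+ x. ennreal (pX x * CE hs x) + ennreal \<epsilon> * ennreal (pX x) \<partial>MX)"
    unfolding L_eq
  proof (intro nn_integral_mono)
    fix x assume x: "x \<in> space MX"
    show "ennreal (pX x * CE h x) \<le> ennreal (pX x * CE hs x) + ennreal \<epsilon> * ennreal (pX x)"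
    proof (cases "0 < pX x")
      case True
      then have "pX x * CE h x \<le> pX x * CE hs x + \<epsilon> * pX x"
        using mult_left_mono[OF pointwise[OF x True, folded CE_def], of "pX x"] by (simp add: algebra_simps)
      moreover have "0 \<le> CE hs x" unfolding CE_def using PC_nonneg by (intro cross_entropy_nonneg) auto
      ultimately show ?thesis
        using True \<open>0 \<le> \<epsilon>\<close> by (simp add: ennreal_leI flip: ennreal_mult ennreal_plus)
    qed (use pX_nonneg[of x] in simp)
  qed
  also have "\<dots> = L_sup MX pX PC K hs + ennreal \<epsilon> * (\<integral>\<^sup>+ x. ennreal (pX x) \<partial>MX)"
    by (simp add: L_eq nn_integral_add nn_integral_cmult)
  finally show ?thesis using pX_total by simp
qed

theorem theorem2:
  fixes MX :: "'x measure" and MY :: "'y measure"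
    and p :: "'x \<Rightarrow> 'y \<Rightarrow> real" and pX :: "'x \<Rightarrow> real" and pY :: "'y \<Rightarrow> real"
    and K :: nat and PC :: "'x \<Rightarrow> nat \<Rightarrow> real"
    and fX :: "'x \<Rightarrow> real ^ 'd" and fY :: "'y \<Rightarrow> real ^ 'd"
    and \<tau> \<Gamma> \<epsilon>1 \<epsilon>2 \<Delta> :: real
    and Ys :: "nat \<Rightarrow> 'y set"
    and hstar :: "'x \<Rightarrow> nat \<Rightarrow> real"
  assumes MX: "sigma_finite_measure MX" and MY: "sigma_finite_measure MY"
    and p_meas: "(\<lambda>(x, y). p x y) \<in> borel_measurable (MX \<Otimes>\<^sub>M MY)"
    and p_nonneg: "\<And>x y. 0 \<le> p x y"
    and p_total: "(\<integral>\<^sup>+ z. ennreal (case z of (x, y) \<Rightarrow> p x y) \<partial>(MX \<Otimes>\<^sub>M MY)) = 1"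
    and pX_marg: "\<And>x. (\<integral>\<^sup>+ y. ennreal (p x y) \<partial>MY) = ennreal (pX x)"
    and pY_marg: "\<And>y. (\<integral>\<^sup>+ x. ennreal (p x y) \<partial>MX) = ennreal (pY y)"
    and pX_nonneg: "\<And>x. 0 \<le> pX x" and pY_nonneg: "\<And>y. 0 \<le> pY y"
    and pX_meas: "pX \<in> borel_measurable MX" and pY_meas: "pY \<in> borel_measurable MY"
    and K_pos: "1 \<le> K"
    and PC_meas: "\<And>c. (\<lambda>x. PC x c) \<in> borel_measurable MX"
    and PC_nonneg: "\<And>x c. 0 \<le> PC x c"
    and PC_sum: "\<And>x. (\<Sum>c\<in>{1..K}. PC x c) = 1"
    and fX_meas: "fX \<in> borel_measurable MX" and fY_meas: "fY \<in> borel_measurable MY"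
    and tau_pos: "0 < \<tau>"
    and Ys_sets: "\<And>i. i \<in> {1..K} \<Longrightarrow> Ys i \<in> sets MY"
    and Ys_disj: "disjoint_family_on Ys {1..K}"
    and Ys_pos: "\<And>i. i \<in> {1..K} \<Longrightarrow> 0 < prob_Y MY pY (Ys i)"
    and eps1_nonneg: "0 \<le> \<epsilon>1" and eps2_nonneg: "0 \<le> \<epsilon>2"
    and KL1: "\<And>x. 0 < pX x \<Longrightarrow>
       KL_discrete K (PC x) (class_post_sets MY p pX K Ys x) \<le> ereal \<epsilon>1"
    and KL2: "\<And>x c. 0 < pX x \<Longrightarrow> c \<in> {1..K} \<Longrightarrow>
       KL_density MY (dens_Y_given_set MY pY (Ys c)) (dens_Y_given_x_set MY p pX x (Ys c))
         \<le> ereal \<epsilon>2"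
    and Delta_nonneg: "0 \<le> \<Delta>"
    and approx: "\<And>x y. 0 < pX x \<Longrightarrow> 0 < pY y \<Longrightarrow>
       0 < p x y \<and>
       \<bar>(fX x \<bullet> fY y) / \<tau> - (ln (p x y / (pX x * pY y)) + \<Gamma>)\<bar> \<le> \<Delta>"
    and hstar_meas: "\<And>c. (\<lambda>x. hstar x c) \<in> borel_measurable MX"
    and hstar_min: "\<And>h. (\<And>c. (\<lambda>x. h x c) \<in> borel_measurable MX) \<Longrightarrow>
       L_sup MX pX PC K hstar \<le> L_sup MX pX PC K h"
  shows "(INF Wb \<in> (UNIV :: ((nat \<Rightarrow> real ^ 'd) \<times> (nat \<Rightarrow> real)) set).
            L_sup MX pX PC K (\<lambda>x c. fst Wb c \<bullet> fX x + snd Wb c))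
         \<le> L_sup MX pX PC K hstar + ennreal (\<epsilon>1 + \<epsilon>2 + 2 * \<Delta>)"
proof -
  have "\<exists>W b. \<forall>c\<in>{1..K}. \<forall>x\<in>space MX. 0 < pX x \<longrightarrow>
     ln (prob_Y_cond MY p pX x (Ys c)) - (\<epsilon>2 + \<Delta>) \<le> W c \<bullet> fX x + b c \<and>
     W c \<bullet> fX x + b c \<le> ln (prob_Y_cond MY p pX x (Ys c)) + \<Delta>"
    by (rule ex_linear_logits_near_ln_prob_Y_cond;
        fact p_meas p_nonneg pY_nonneg pX_marg fY_meas Ys_sets Ys_pos KL2 approx)
  then obtain W b where logits: "\<forall>c\<in>{1..K}. \<forall>x\<in>space MX. 0 < pX x \<longrightarrow>
     ln (prob_Y_cond MY p pX x (Ys c)) - (\<epsilon>2 + \<Delta>) \<le> W c \<bullet> fX x + b c \<and>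
     W c \<bullet> fX x + b c \<le> ln (prob_Y_cond MY p pX x (Ys c)) + \<Delta>"
    by blast
  have "L_sup MX pX PC K (\<lambda>x c. W c \<bullet> fX x + b c) \<le> L_sup MX pX PC K hstar + ennreal (\<epsilon>1 + \<epsilon>2 + 2 * \<Delta>)"
  proof (rule L_sup_le_add_of_pointwise[OF pX_meas pX_nonneg
        nn_integral_marginal_eq_1[OF MY p_meas p_total pX_marg] PC_meas PC_nonneg hstar_meas])
    show "0 \<le> \<epsilon>1 + \<epsilon>2 + 2 * \<Delta>" using eps1_nonneg eps2_nonneg Delta_nonneg by simp
    fix x assume x: "x \<in> space MX" and pX_pos: "0 < pX x"
    have int: "integrable MY (\<lambda>y. cond_dens p pX x y)"
      by (rule integrable_cond_dens[where p=p and pX=pX, OF p_meas x]) (simp_all add: p_nonneg pX_nonneg pX_marg)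
    have "0 < prob_Y_cond MY p pX x (Ys c)" if c: "c \<in> {1..K}" for c
      by (rule prob_Y_cond_pos[OF int Ys_sets[OF c] p_nonneg pX_pos pY_nonneg _ Ys_pos[OF c]])
        (use approx[OF pX_pos] in blast)
    then have "cross_entropy {1..K} (PC x) (\<lambda>c. W c \<bullet> fX x + b c)
        \<le> cross_entropy {1..K} (PC x) (hstar x) + (\<epsilon>1 + (\<epsilon>2 + \<Delta>) + \<Delta>)"
      using logits x pX_pos
      by (intro cross_entropy_le_of_class_post_sets[OF int Ys_sets Ys_disj _ PC_nonneg PC_sum KL1[OF pX_pos]])
        auto
    then show "cross_entropy {1..K} (PC x) (\<lambda>c. W c \<bullet> fX x + b c)
        \<le> cross_entropy {1..K} (PC x) (hstar x) + (\<epsilon>1 + \<epsilon>2 + 2 * \<Delta>)"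
      by simp
  qed
  then show ?thesis by (intro INF_lower2[of "(W, b)"]) simp_all
qed

end
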